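(* Let $R$ be a rod set and $\mathsf T$ an expansion subtree of $\mathrm{Tree}(R)$. Let $Q=\langle\mathrm{Inner}(\mathsf T)\rangle$ and $S=\langle\mathrm{Leaves}(\mathsf T)\rangle$. Then for every $n>0$, $$D(n,R,S)=C(n,Q).$$
   Context: A rod is a triple $(r,c,\varepsilon)$ with $r$ a positive integer (length), $c$ a tag (color) and $\varepsilon\in\{\pm1\}$ (sign); rods of sign $-1$ are antirods. A rod set is a set of rods with finitely many rods of each length. A train built from $R$ is a finite sequence of rods of $R$ (including the empty train $\Lambda$); its length is the sum of lengths and its sign the product of signs. For a set $X$ of trains, $\langle X\rangle$ is the rod set containing, for each nonempty train $\tau\in X$, one rod whose length and sign are those of $\tau$. $C(n,R)$ is the number of positive rods of length $n$ in $R$ minus the number of antirods of length $n$. $F(n,R)$ is the number of positive trains of length $n$ built from $R$ minus the number of negative ones, with $F(0,R)=1$ and $F(n,R)=0$ for $n<0$. The discrepancy is $D(n,R,S)=F(n,R)-\sum_{k\in S}(\operatorname{sign}k)F(n-\operatorname{len}(k),R)$. $\mathrm{Tree}(R)$ is the rooted tree with nodes the trains built from $R$, root $\Lambda$, and children of $\tau$ the trains $\tau k$, $k\in R$ (one per rod of $R$). An expansion subtree $\mathsf T$ is a rooted subtree containing all children of the root, and containing all children of any node of which it contains at least one child. $\mathrm{Inner}(\mathsf T)$ is the set of non-root nodes with children in $\mathsf T$; $\mathrm{Leaves}(\mathsf T)$ the set of nodes of $\mathsf T$ with no children in $\mathsf T$. *)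

theory Defs
  imports Main
begin

type_synonym 'c rod = "nat \<times> 'c \<times> int"

definition rlen :: "'c rod \<Rightarrow> nat" where "rlen k = fst k"
definition rcol :: "'c rod \<Rightarrow> 'c" where "rcol k = fst (snd k)"
definition rsgn :: "'c rod \<Rightarrow> int" where "rsgn k = snd (snd k)"

definition rod_set :: "'c rod set \<Rightarrow> bool" where
  "rod_set R \<longleftrightarrow> (\<forall>k\<in>R. rlen k > 0 \<and> (rsgn k = 1 \<or> rsgn k = -1))
                  \<and> (\<forall>n. finite {k\<in>R. rlen k = n})"

definition train_len :: "'c rod list \<Rightarrow> nat" where
  "train_len \<tau> = sum_list (map rlen \<tau>)"
definition train_sign :: "'c rod list \<Rightarrow> int" where
  "train_sign \<tau> = prod_list (map rsgn \<tau>)"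

definition trains :: "'c rod set \<Rightarrow> 'c rod list set" where
  "trains R = {\<tau>. set \<tau> \<subseteq> R}"

definition rods_of :: "'c rod list set \<Rightarrow> ('c rod list) rod set" where
  "rods_of X = {(train_len \<tau>, \<tau>, train_sign \<tau>) | \<tau>. \<tau> \<in> X \<and> \<tau> \<noteq> []}"

definition Ccount :: "nat \<Rightarrow> 'c rod set \<Rightarrow> int" where
  "Ccount n R = int (card {k\<in>R. rlen k = n \<and> rsgn k = 1})
              - int (card {k\<in>R. rlen k = n \<and> rsgn k = -1})"

definition Fcount :: "int \<Rightarrow> 'c rod set \<Rightarrow> int" where
  "Fcount n R = (if n < 0 then 0 else if n = 0 then 1 else
     (\<Sum>\<tau>\<in>{\<tau>\<in>trains R. int (train_len \<tau>) = n}. train_sign \<tau>))"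

text \<open>Discrepancy; terms with len k > n vanish since F is 0 at negative arguments.\<close>
definition Disc :: "int \<Rightarrow> 'c rod set \<Rightarrow> 'd rod set \<Rightarrow> int" where
  "Disc n R S = Fcount n R
     - (\<Sum>k\<in>{k\<in>S. int (rlen k) \<le> n}. rsgn k * Fcount (n - int (rlen k)) R)"

definition expansion_subtree :: "'c rod set \<Rightarrow> 'c rod list set \<Rightarrow> bool" where
  "expansion_subtree R T \<longleftrightarrow>
     T \<subseteq> trains R \<and> [] \<in> T
     \<and> (\<forall>\<tau> k. \<tau> @ [k] \<in> T \<longrightarrow> \<tau> \<in> T)
     \<and> (\<forall>k\<in>R. [k] \<in> T)
     \<and> (\<forall>\<tau>. (\<exists>k\<in>R. \<tau> @ [k] \<in> T) \<longrightarrow> (\<forall>k\<in>R. \<tau> @ [k] \<in> T))"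

definition Inner :: "'c rod set \<Rightarrow> 'c rod list set \<Rightarrow> 'c rod list set" where
  "Inner R T = {\<tau>\<in>T. \<tau> \<noteq> [] \<and> (\<exists>k\<in>R. \<tau> @ [k] \<in> T)}"

definition Leaves :: "'c rod set \<Rightarrow> 'c rod list set \<Rightarrow> 'c rod list set" where
  "Leaves R T = {\<tau>\<in>T. \<not> (\<exists>k\<in>R. \<tau> @ [k] \<in> T)}"

end

theory Submission
  imports Defs
begin

text \<open>Walking down a nonempty train from the root, one either stays inside the expansion
subtree \<open>T\<close> (and then ends at an inner node or a leaf) or leaves it right after a leaf, because a
node with one child in \<open>T\<close> has all its children in \<open>T\<close>. Hence every nonempty train is either an
inner node or uniquely of the form \<open>l \<rho>\<close> with \<open>l\<close> a nonempty leaf and \<open>\<rho>\<close> an arbitrary train.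
Summing signs over the trains of length \<open>n\<close> gives
\<open>F(n,R) = C(n,Q) + \<Sum>\<^sub>l sign(l) F(n - len l, R)\<close>, which is the claim.\<close>

lemma train_len_Nil [simp]: "train_len [] = 0"
  and train_len_Cons [simp]: "train_len (k # \<tau>) = rlen k + train_len \<tau>"
  and train_len_append [simp]: "train_len (\<sigma> @ \<tau>) = train_len \<sigma> + train_len \<tau>"
  by (simp_all add: train_len_def)

lemma train_sign_Nil [simp]: "train_sign [] = 1"
  and train_sign_Cons [simp]: "train_sign (k # \<tau>) = rsgn k * train_sign \<tau>"
  and train_sign_append [simp]: "train_sign (\<sigma> @ \<tau>) = train_sign \<sigma> * train_sign \<tau>"
  by (simp_all add: train_sign_def)

lemma Nil_in_trains [simp]: "[] \<in> trains R"
  and Cons_in_trains [simp]: "k # \<tau> \<in> trains R \<longleftrightarrow> k \<in> R \<and> \<tau> \<in> trains R"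
  and append_in_trains [simp]: "\<sigma> @ \<tau> \<in> trains R \<longleftrightarrow> \<sigma> \<in> trains R \<and> \<tau> \<in> trains R"
  by (auto simp: trains_def)

lemma length_le_train_len: "rod_set R \<Longrightarrow> \<tau> \<in> trains R \<Longrightarrow> length \<tau> \<le> train_len \<tau>"
  by (induction \<tau>) (auto simp: rod_set_def Suc_le_eq)

lemma train_sign_cases: "rod_set R \<Longrightarrow> \<tau> \<in> trains R \<Longrightarrow> train_sign \<tau> = 1 \<or> train_sign \<tau> = -1"
  by (induction \<tau>) (auto simp: rod_set_def)

lemma rlen_le_train_len: "k \<in> set \<tau> \<Longrightarrow> rlen k \<le> train_len \<tau>"
  by (induction \<tau>) auto

definition trains_of_len :: "'c rod set \<Rightarrow> nat \<Rightarrow> 'c rod list set" where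
  "trains_of_len R m = {\<tau> \<in> trains R. train_len \<tau> = m}"

lemma finite_trains_of_len:
  assumes "rod_set R"
  shows "finite (trains_of_len R m)"
proof -
  have "{k\<in>R. rlen k \<le> m} = (\<Union>i\<le>m. {k\<in>R. rlen k = i})"
    by auto
  then have "finite {k\<in>R. rlen k \<le> m}"
    using assms by (simp add: rod_set_def)
  moreover have "trains_of_len R m \<subseteq> {\<tau>. set \<tau> \<subseteq> {k\<in>R. rlen k \<le> m} \<and> length \<tau> \<le> m}"
    using length_le_train_len[OF assms] rlen_le_train_len
    by (fastforce simp: trains_of_len_def trains_def)
  ultimately show ?thesis
    using finite_lists_length_le finite_subset by blast
qed

lemma Fcount_eq_sum_trains_of_len:
  assumes "rod_set R"
  shows "Fcount (int m) R = (\<Sum>\<tau>\<in>trains_of_len R m. train_sign \<tau>)"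
proof (cases "m = 0")
  case True
  have "trains_of_len R 0 = {[]}"
    using length_le_train_len[OF assms] by (fastforce simp: trains_of_len_def)
  with True show ?thesis
    by (simp add: Fcount_def)
qed (simp add: Fcount_def trains_of_len_def)

lemma expansion_subtree_trains: "expansion_subtree R T \<Longrightarrow> \<tau> \<in> T \<Longrightarrow> \<tau> \<in> trains R"
  by (auto simp: expansion_subtree_def)

lemma expansion_subtree_prefix_closed:
  assumes "expansion_subtree R T" "\<sigma> @ \<tau> \<in> T"
  shows "\<sigma> \<in> T"
  using assms(2)
proof (induction \<tau> rule: rev_induct)
  case (snoc k \<tau>)
  then have "(\<sigma> @ \<tau>) @ [k] \<in> T"
    by simp
  then show ?case
    using assms(1) snoc.IH unfolding expansion_subtree_def by blast
qed simp

lemma Leaves_extension_in_tree_Nil: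
  assumes "expansion_subtree R T" "l \<in> Leaves R T" "l @ \<rho> \<in> T"
  shows "\<rho> = []"
proof (rule ccontr)
  assume "\<rho> \<noteq> []"
  then obtain k \<rho>' where \<rho>: "\<rho> = k # \<rho>'"
    by (cases \<rho>) auto
  with assms(3) have "(l @ [k]) @ \<rho>' \<in> T"
    by simp
  then have "l @ [k] \<in> T"
    using expansion_subtree_prefix_closed[OF assms(1)] by blast
  moreover have "k \<in> R"
    using expansion_subtree_trains[OF assms(1,3)] \<rho> by simp
  ultimately show False
    using assms(2) by (auto simp: Leaves_def)
qed

lemma append_Leaves_notin_Inner:
  assumes "expansion_subtree R T" "l \<in> Leaves R T"
  shows "l @ \<rho> \<notin> Inner R T"
  using Leaves_extension_in_tree_Nil[OF assms] assms(2) by (auto simp: Inner_def Leaves_def)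

lemma Leaves_prefix_unique:
  assumes "expansion_subtree R T" "l\<^sub>1 \<in> Leaves R T" "l\<^sub>2 \<in> Leaves R T"
    and "l\<^sub>1 @ \<rho>\<^sub>1 = l\<^sub>2 @ \<rho>\<^sub>2"
  shows "l\<^sub>1 = l\<^sub>2"
proof -
  have T: "l\<^sub>1 \<in> T" "l\<^sub>2 \<in> T"
    using assms(2,3) by (auto simp: Leaves_def)
  obtain us where "l\<^sub>1 = l\<^sub>2 @ us \<or> l\<^sub>1 @ us = l\<^sub>2"
    using assms(4) append_eq_append_conv2 by metis
  then show ?thesis
    using Leaves_extension_in_tree_Nil[OF assms(1)] assms(2,3) T by auto
qed

lemma trains_in_tree_or_extend_leaf:
  assumes "expansion_subtree R T" "\<sigma> \<in> trains R" "\<sigma> \<noteq> []"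
  shows "\<sigma> \<in> T \<or> (\<exists>l \<rho>. l \<in> Leaves R T \<and> l \<noteq> [] \<and> \<sigma> = l @ \<rho>)"
  using assms(2,3)
proof (induction \<sigma> rule: rev_induct)
  case (snoc k \<sigma>)
  then have k: "k \<in> R" and \<sigma>: "\<sigma> \<in> trains R"
    by auto
  show ?case
  proof (cases "\<sigma> = [] \<or> (\<exists>k'\<in>R. \<sigma> @ [k'] \<in> T)")
    case True
    then have "\<sigma> @ [k] \<in> T"
      using assms(1) k by (auto simp: expansion_subtree_def)
    then show ?thesis ..
  next
    case False
    with snoc.IH \<sigma> have "\<sigma> \<in> T \<or> (\<exists>l \<rho>. l \<in> Leaves R T \<and> l \<noteq> [] \<and> \<sigma> = l @ \<rho>)"
      by blast
    then show ?thesis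
    proof
      assume "\<sigma> \<in> T"
      with False have "\<sigma> \<in> Leaves R T" "\<sigma> \<noteq> []"
        by (auto simp: Leaves_def)
      then show ?thesis
        by blast
    qed (metis append.assoc)
  qed
qed simp

lemma trains_of_len_decomposition:
  assumes "expansion_subtree R T" "N > 0"
  defines "L \<equiv> {l \<in> Leaves R T. l \<noteq> [] \<and> train_len l \<le> N}"
  shows "trains_of_len R N = {\<sigma> \<in> Inner R T. train_len \<sigma> = N}
           \<union> (\<Union>l\<in>L. (@) l ` trains_of_len R (N - train_len l))"
    (is "_ = ?A \<union> ?B")
proof (intro equalityI subsetI)
  fix \<sigma>
  assume \<sigma>: "\<sigma> \<in> trains_of_len R N"
  with assms(2) have "\<sigma> \<in> trains R" "\<sigma> \<noteq> []" "train_len \<sigma> = N"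
    by (auto simp: trains_of_len_def)
  with trains_in_tree_or_extend_leaf[OF assms(1)]
  consider "\<sigma> \<in> T" "\<sigma> \<notin> Leaves R T" | "\<exists>l \<rho>. l \<in> Leaves R T \<and> l \<noteq> [] \<and> \<sigma> = l @ \<rho>"
    by (metis append.right_neutral)
  then show "\<sigma> \<in> ?A \<union> ?B"
  proof cases
    case 1
    with \<open>\<sigma> \<noteq> []\<close> \<open>train_len \<sigma> = N\<close> show ?thesis
      by (auto simp: Inner_def Leaves_def)
  next
    case 2
    then obtain l \<rho> where "l \<in> Leaves R T" "l \<noteq> []" "\<sigma> = l @ \<rho>"
      by blast
    with \<sigma> show ?thesis
      by (auto simp: L_def trains_of_len_def)
  qed
next
  fix \<sigma>
  assume "\<sigma> \<in> ?A \<union> ?B"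
  moreover have "\<tau> \<in> Inner R T \<Longrightarrow> \<tau> \<in> trains R" "\<tau> \<in> Leaves R T \<Longrightarrow> \<tau> \<in> trains R" for \<tau>
    using expansion_subtree_trains[OF assms(1)] by (auto simp: Inner_def Leaves_def)
  ultimately show "\<sigma> \<in> trains_of_len R N"
    by (auto simp: L_def trains_of_len_def)
qed

lemma Fcount_expansion:
  assumes "rod_set R" "expansion_subtree R T" "N > 0"
  shows "Fcount (int N) R = (\<Sum>\<sigma>\<in>{\<sigma> \<in> Inner R T. train_len \<sigma> = N}. train_sign \<sigma>)
           + (\<Sum>l\<in>{l \<in> Leaves R T. l \<noteq> [] \<and> train_len l \<le> N}.
                train_sign l * Fcount (int (N - train_len l)) R)"
proof -
  define A where "A = {\<sigma> \<in> Inner R T. train_len \<sigma> = N}"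
  define L where "L = {l \<in> Leaves R T. l \<noteq> [] \<and> train_len l \<le> N}"
  define B where "B l = (@) l ` trains_of_len R (N - train_len l)" for l
  have decomp: "trains_of_len R N = A \<union> (\<Union>l\<in>L. B l)"
    using trains_of_len_decomposition[OF assms(2,3)] by (simp add: A_def L_def B_def)
  have fin_B: "finite (B l)" for l
    using finite_trains_of_len[OF assms(1)] by (simp add: B_def)
  have "L \<subseteq> (\<Union>i\<le>N. trains_of_len R i)"
    using expansion_subtree_trains[OF assms(2)] by (auto simp: L_def Leaves_def trains_of_len_def)
  then have fin_L: "finite L"
    using finite_trains_of_len[OF assms(1)] finite_subset by blast
  have fin_A: "finite A"
    using finite_trains_of_len[OF assms(1), of N] unfolding decomp by simp
  have disj_A_B: "A \<inter> (\<Union>l\<in>L. B l) = {}"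
    using append_Leaves_notin_Inner[OF assms(2)] by (auto simp: A_def B_def L_def)
  have disj_B: "B l\<^sub>1 \<inter> B l\<^sub>2 = {}" if "l\<^sub>1 \<in> L" "l\<^sub>2 \<in> L" "l\<^sub>1 \<noteq> l\<^sub>2" for l\<^sub>1 l\<^sub>2
  proof -
    have "l\<^sub>1 @ \<rho>\<^sub>1 \<noteq> l\<^sub>2 @ \<rho>\<^sub>2" for \<rho>\<^sub>1 \<rho>\<^sub>2
      using Leaves_prefix_unique[OF assms(2)] that by (auto simp: L_def)
    then show ?thesis
      by (auto simp: B_def)
  qed
  have sum_B: "(\<Sum>\<sigma>\<in>B l. train_sign \<sigma>) = train_sign l * Fcount (int (N - train_len l)) R" for l
    by (simp add: B_def sum.reindex inj_on_def sum_distrib_left Fcount_eq_sum_trains_of_len[OF assms(1)])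
  have "Fcount (int N) R = (\<Sum>\<sigma>\<in>A \<union> (\<Union>l\<in>L. B l). train_sign \<sigma>)"
    by (simp add: Fcount_eq_sum_trains_of_len[OF assms(1)] decomp)
  also have "\<dots> = (\<Sum>\<sigma>\<in>A. train_sign \<sigma>) + (\<Sum>l\<in>L. \<Sum>\<sigma>\<in>B l. train_sign \<sigma>)"
    using fin_A fin_L fin_B disj_A_B disj_B by (simp add: sum.union_disjoint sum.UNION_disjoint)
  finally show ?thesis
    by (simp add: sum_B A_def L_def)
qed

definition train_rod :: "'c rod list \<Rightarrow> ('c rod list) rod" where
  "train_rod \<tau> = (train_len \<tau>, \<tau>, train_sign \<tau>)"

lemma rlen_train_rod [simp]: "rlen (train_rod \<tau>) = train_len \<tau>"
  and rsgn_train_rod [simp]: "rsgn (train_rod \<tau>) = train_sign \<tau>"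
  by (simp_all add: train_rod_def rlen_def rsgn_def)

lemma rods_of_filter_len:
  "{k \<in> rods_of X. P (rlen k)} = train_rod ` {\<tau> \<in> X. \<tau> \<noteq> [] \<and> P (train_len \<tau>)}"
  by (auto simp: rods_of_def train_rod_def rlen_def)

lemma inj_train_rod: "inj train_rod"
  by (auto intro: injI simp: train_rod_def)

lemma sum_rods_of_filter_len:
  "(\<Sum>k\<in>{k \<in> rods_of X. P (rlen k)}. f k)
     = (\<Sum>\<tau>\<in>{\<tau> \<in> X. \<tau> \<noteq> [] \<and> P (train_len \<tau>)}. f (train_rod \<tau>))"
  unfolding rods_of_filter_len by (simp add: sum.reindex inj_on_subset[OF inj_train_rod])

lemma Ccount_eq_sum_rsgn:
  assumes "finite {k \<in> X. rlen k = n}" "\<forall>k\<in>X. rsgn k = 1 \<or> rsgn k = -1"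
  shows "Ccount n X = (\<Sum>k\<in>{k \<in> X. rlen k = n}. rsgn k)"
proof -
  let ?P = "{k \<in> X. rlen k = n \<and> rsgn k = 1}" and ?M = "{k \<in> X. rlen k = n \<and> rsgn k = -1}"
  have "{k \<in> X. rlen k = n} = ?P \<union> ?M"
    using assms(2) by auto
  moreover have "finite ?P" "finite ?M"
    by (rule finite_subset[OF _ assms(1)]; blast)+
  moreover have "(\<Sum>k\<in>?P. rsgn k) = int (card ?P)"
    by (subst sum.cong[OF refl, where h = "\<lambda>_. 1"]) auto
  moreover have "(\<Sum>k\<in>?M. rsgn k) = - int (card ?M)"
    by (subst sum.cong[OF refl, where h = "\<lambda>_. -1"]) auto
  moreover have "?P \<inter> ?M = {}" by auto
  ultimately show ?thesis
    unfolding Ccount_def by (simp add: sum.union_disjoint)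
qed

lemma Ccount_rods_of:
  assumes "rod_set R" "X \<subseteq> trains R" "n > 0"
  shows "Ccount n (rods_of X) = (\<Sum>\<tau>\<in>{\<tau> \<in> X. train_len \<tau> = n}. train_sign \<tau>)"
proof -
  have nonempty: "{\<tau> \<in> X. \<tau> \<noteq> [] \<and> train_len \<tau> = n} = {\<tau> \<in> X. train_len \<tau> = n}"
    using assms(3) by auto
  have "{\<tau> \<in> X. train_len \<tau> = n} \<subseteq> trains_of_len R n"
    using assms(2) by (auto simp: trains_of_len_def)
  then have "finite {\<tau> \<in> X. train_len \<tau> = n}"
    using finite_trains_of_len[OF assms(1)] finite_subset by blast
  then have "finite {k \<in> rods_of X. rlen k = n}"
    using rods_of_filter_len[of X "\<lambda>m. m = n"] nonempty by simp
  moreover have "\<forall>k\<in>rods_of X. rsgn k = 1 \<or> rsgn k = -1"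
    using train_sign_cases[OF assms(1)] assms(2) by (auto simp: rods_of_def rsgn_def)
  ultimately have "Ccount n (rods_of X) = (\<Sum>k\<in>{k \<in> rods_of X. rlen k = n}. rsgn k)"
    by (rule Ccount_eq_sum_rsgn)
  also have "\<dots> = (\<Sum>\<tau>\<in>{\<tau> \<in> X. \<tau> \<noteq> [] \<and> train_len \<tau> = n}. rsgn (train_rod \<tau>))"
    by (rule sum_rods_of_filter_len[where P = "\<lambda>m. m = n"])
  finally show ?thesis
    using nonempty by simp
qed

lemma Disc_rods_of:
  "Disc (int N) R (rods_of X) = Fcount (int N) R
     - (\<Sum>l\<in>{l \<in> X. l \<noteq> [] \<and> train_len l \<le> N}. train_sign l * Fcount (int (N - train_len l)) R)"
proof -
  have "(\<Sum>k\<in>{k \<in> rods_of X. int (rlen k) \<le> int N}. rsgn k * Fcount (int N - int (rlen k)) R)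
      = (\<Sum>l\<in>{l \<in> X. l \<noteq> [] \<and> int (train_len l) \<le> int N}.
           rsgn (train_rod l) * Fcount (int N - int (rlen (train_rod l))) R)"
    by (rule sum_rods_of_filter_len[where P = "\<lambda>m. int m \<le> int N"])
  also have "\<dots> = (\<Sum>l\<in>{l \<in> X. l \<noteq> [] \<and> train_len l \<le> N}.
           train_sign l * Fcount (int (N - train_len l)) R)"
    by (rule sum.cong) (auto simp: of_nat_diff)
  finally show ?thesis
    unfolding Disc_def by simp
qed

theorem mainTheorem4:
  fixes R :: "'c rod set" and T :: "'c rod list set" and n :: int
  assumes "rod_set R" and "expansion_subtree R T" and "n > 0"
  shows "Disc n R (rods_of (Leaves R T)) = Ccount (nat n) (rods_of (Inner R T))"
proof -
  obtain N where n: "n = int N" "N > 0"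
    using assms(3) pos_int_cases by blast
  have "Inner R T \<subseteq> trains R"
    using expansion_subtree_trains[OF assms(2)] by (auto simp: Inner_def)
  then show ?thesis
    using Fcount_expansion[OF assms(1,2) n(2)]
    by (simp add: n Disc_rods_of Ccount_rods_of[OF assms(1)])
qed

end
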